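(* Let $v$ be any Borel measurable function from $[0,T]\times\mathbb{R}^d$ to $\mathbb{R}$ such that $$\int_0^T \mathbb{E}\Big[\Big|\inf_{\kappa\in U} H\big(t,X_t,\kappa,\partial_x v(t,X_t),\partial_{xx}^2 v(t,X_t)\big)\Big|\Big]\,\mathrm{d}t<\infty.$$ Assume the optimal feedback control exists under $v$, i.e. there is $u\in\mathcal{U}_{\mathrm{ad}}$ with $$H_t^{u,v}=\inf_{\kappa\in U} H\big(t,X_t,\kappa,\partial_x v(t,X_t),\partial_{xx}^2 v(t,X_t)\big)\quad (\ast)$$ for $(t,\omega)\in[0,T]\times\Omega$, a.e.-$\mathrm{d}t\times\mathbb{P}$. Then a control $u$ satisfying $(\ast)$ can be found from the minimization problem: find $u\in\mathcal{U}_{\mathrm{ad}}$ such that $$\int_0^T\mathbb{E}[H_t^{u,v}]\,\mathrm{d}t=\inf_{\bar u\in\mathcal{U}_{\mathrm{ad}}}\int_0^T\mathbb{E}[H_t^{\bar u,v}]\,\mathrm{d}t;$$ i.e. this minimization problem has a solution, and any solution satisfies $(\ast)$ a.e.-$\mathrm{d}t\times\mathbb{P}$.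
   Context: Let $(\Omega,\mathcal{F},\mathbb{F}^B,\mathbb{P})$ be a filtered complete probability space with $\mathbb{F}^B=(\mathcal{F}_t)_{0\le t\le T}$ the natural filtration of a standard $q$-dimensional Brownian motion $B$, and $T\in(0,\infty)$. Let $U\subset\mathbb{R}^m$ and let $\mathcal{U}_{\mathrm{ad}}$ be the set of Borel measurable functions $u:[0,T]\times\mathbb{R}^d\to U$. Let $H:[0,T]\times\mathbb{R}^d\times U\times\mathbb{R}^d\times\mathbb{R}^{d\times d}\to\mathbb{R}$, $(t,x,\kappa,z,p)\mapsto H(t,x,\kappa,z,p)$, be the Hamiltonian of the HJB-type equation $\partial_t v+\mathcal{L}v+\inf_{\kappa\in U}H(t,x,\kappa,\partial_x v,\partial_{xx}^2 v)=0$, where $\mathcal{L}=\mu^\top(t,x)\partial_x+\frac12\operatorname{Tr}[\sigma\sigma^\top(t,x)\partial_{xx}^2]$ for given $\mu:[0,T]\times\mathbb{R}^d\to\mathbb{R}^d$, $\sigma:[0,T]\times\mathbb{R}^d\to\mathbb{R}^{d\times q}$. Let $X$ be the uncontrolled diffusion $X_t=X_0+\int_0^t\mu(s,X_s)\,\mathrm{d}s+\int_0^t\sigma(s,X_s)\,\mathrm{d}B_s$, $t\in[0,T]$. For $u\in\mathcal{U}_{\mathrm{ad}}$ and $v$, the Hamiltonian process is $H_t^{u,v}:=H\big(t,X_t,u(t,X_t),\partial_x v(t,X_t),\partial_{xx}^2 v(t,X_t)\big)$ (with $\partial_x$ the gradient and $\partial_{xx}^2$ the Hessian in $x$). *)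

theory Defs
  imports "HOL-Probability.Probability"
begin

definition pgrad :: "(real \<Rightarrow> real^'d \<Rightarrow> real) \<Rightarrow> real \<Rightarrow> real^'d \<Rightarrow> real^'d" where
  "pgrad v t x = (\<chi> i. deriv (\<lambda>s. v t (x + s *\<^sub>R axis i 1)) 0)"

definition phess :: "(real \<Rightarrow> real^'d \<Rightarrow> real) \<Rightarrow> real \<Rightarrow> real^'d \<Rightarrow> real^'d^'d" where
  "phess v t x = (\<chi> i j. deriv (\<lambda>s. pgrad v t (x + s *\<^sub>R axis j 1) $ i) 0)"

definition admissible :: "(real^'m) set \<Rightarrow> (real \<Rightarrow> real^'d \<Rightarrow> real^'m) \<Rightarrow> bool" where
  "admissible U u \<longleftrightarrow> (\<lambda>(t, x). u t x) \<in> borel_measurable borel \<and> (\<forall>t x. u t x \<in> U)"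

definition hamproc ::
  "(real \<Rightarrow> real^'d \<Rightarrow> real^'m \<Rightarrow> real^'d \<Rightarrow> real^'d^'d \<Rightarrow> real)
   \<Rightarrow> (real \<Rightarrow> 'a \<Rightarrow> real^'d) \<Rightarrow> (real \<Rightarrow> real^'d \<Rightarrow> real)
   \<Rightarrow> (real \<Rightarrow> real^'d \<Rightarrow> real^'m) \<Rightarrow> real \<Rightarrow> 'a \<Rightarrow> real" where
  "hamproc H X v u t \<omega> =
     H t (X t \<omega>) (u t (X t \<omega>)) (pgrad v t (X t \<omega>)) (phess v t (X t \<omega>))"

text \<open>The infimum over U of the Hamiltonian along X (extended-real valued, so that
  an unbounded-below set gives -infinity).\<close>

definition infham ::
  "(real \<Rightarrow> real^'d \<Rightarrow> real^'m \<Rightarrow> real^'d \<Rightarrow> real^'d^'d \<Rightarrow> real) \<Rightarrow> (real^'m) set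
   \<Rightarrow> (real \<Rightarrow> 'a \<Rightarrow> real^'d) \<Rightarrow> (real \<Rightarrow> real^'d \<Rightarrow> real) \<Rightarrow> real \<Rightarrow> 'a \<Rightarrow> ereal" where
  "infham H U X v t \<omega> =
     (INF \<kappa>\<in>U. ereal (H t (X t \<omega>) \<kappa> (pgrad v t (X t \<omega>)) (phess v t (X t \<omega>))))"

definition time_exp_integral :: "'a measure \<Rightarrow> real \<Rightarrow> (real \<Rightarrow> 'a \<Rightarrow> real) \<Rightarrow> ereal" where
  "time_exp_integral M T f =
     enn2ereal (\<integral>\<^sup>+ t. indicator {0..T} t * (\<integral>\<^sup>+ \<omega>. ennreal (f t \<omega>) \<partial>M) \<partial>lborel)
   - enn2ereal (\<integral>\<^sup>+ t. indicator {0..T} t * (\<integral>\<^sup>+ \<omega>. ennreal (- f t \<omega>) \<partial>M) \<partial>lborel)"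

end

theory Submission
  imports Defs
begin

text \<open>For every admissible control \<open>u\<close> one has \<open>H^{u,v} \<ge> inf\<^sub>\<kappa> H\<close> pointwise, so an optimal
  feedback control \<open>u\<^sub>0\<close> minimizes \<open>\<integral>\<^sub>0\<^sup>T E[H^{u,v}] dt\<close> by monotonicity of the integral.
  Since \<open>|H^{u\<^sub>0,v}| = |inf\<^sub>\<kappa> H|\<close> a.e., \<open>H^{u\<^sub>0,v}\<close> is integrable. Any other minimizer \<open>u\<close>
  has \<open>H^{u,v} \<ge> H^{u\<^sub>0,v}\<close> a.e. and the same finite integral, and a nonnegative function
  with zero integral vanishes a.e.; hence \<open>H^{u,v} = H^{u\<^sub>0,v} = inf\<^sub>\<kappa> H\<close> a.e.\<close>

definition signed_nn_integral :: "'a measure \<Rightarrow> ('a \<Rightarrow> real) \<Rightarrow> ereal" where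
  "signed_nn_integral N f =
     enn2ereal (\<integral>\<^sup>+ x. ennreal (f x) \<partial>N) - enn2ereal (\<integral>\<^sup>+ x. ennreal (- f x) \<partial>N)"

lemma signed_nn_integral_mono_AE:
  assumes "AE x in N. f x \<le> g x"
  shows "signed_nn_integral N f \<le> signed_nn_integral N g"
proof -
  have "(\<integral>\<^sup>+ x. ennreal (f x) \<partial>N) \<le> (\<integral>\<^sup>+ x. ennreal (g x) \<partial>N)"
    "(\<integral>\<^sup>+ x. ennreal (- g x) \<partial>N) \<le> (\<integral>\<^sup>+ x. ennreal (- f x) \<partial>N)"
    using assms by (auto intro!: nn_integral_mono_AE ennreal_leI elim!: eventually_mono)
  then show ?thesis
    unfolding signed_nn_integral_def
    by (intro ereal_minus_mono) (simp_all add: less_eq_ennreal.rep_eq[symmetric])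
qed

lemma signed_nn_integral_eq_integral:
  assumes "integrable N f"
  shows "signed_nn_integral N f = ereal (integral\<^sup>L N f)"
  using assms by (elim integrableE) (simp add: signed_nn_integral_def)

lemma integrable_if_signed_nn_integral_finite:
  fixes f :: "'a \<Rightarrow> real"
  assumes "f \<in> borel_measurable N" "(\<integral>\<^sup>+ x. ennreal (- f x) \<partial>N) \<noteq> \<infinity>"
    and "signed_nn_integral N f \<noteq> \<infinity>"
  shows "integrable N f"
  using assms unfolding real_integrable_def signed_nn_integral_def by auto

lemma AE_eq_if_signed_nn_integral_eq:
  fixes f g :: "'a \<Rightarrow> real"
  assumes f: "integrable N f" and g: "g \<in> borel_measurable N"
    and le: "AE x in N. f x \<le> g x"
    and eq: "signed_nn_integral N g = signed_nn_integral N f"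
  shows "AE x in N. f x = g x"
proof -
  have "(\<integral>\<^sup>+ x. ennreal (- g x) \<partial>N) \<le> (\<integral>\<^sup>+ x. ennreal (- f x) \<partial>N)"
    using le by (auto intro!: nn_integral_mono_AE ennreal_leI elim!: eventually_mono)
  also have "\<dots> < \<infinity>"
    using f by (simp add: real_integrable_def top.not_eq_extremum)
  finally have "integrable N g"
    using g eq signed_nn_integral_eq_integral[OF f]
    by (intro integrable_if_signed_nn_integral_finite) auto
  moreover have "integral\<^sup>L N f = integral\<^sup>L N g"
    using eq signed_nn_integral_eq_integral[OF f] signed_nn_integral_eq_integral[OF \<open>integrable N g\<close>]
    by simp
  ultimately have "AE x in N. g x - f x = 0"
    using f le by (subst integral_nonneg_eq_0_iff_AE[symmetric]) (auto elim!: eventually_mono)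
  then show ?thesis
    by (auto elim!: eventually_mono)
qed

lemma measurable_restrict_space_pair:
  assumes "f \<in> measurable (borel \<Otimes>\<^sub>M M) N"
  shows "f \<in> measurable (restrict_space lborel S \<Otimes>\<^sub>M M) N"
proof -
  have "fst \<in> borel_measurable (restrict_space lborel S \<Otimes>\<^sub>M M)"
    by (rule measurable_compose[OF measurable_fst measurable_restrict_space1]) simp
  then have "(\<lambda>p. p) \<in> measurable (restrict_space lborel S \<Otimes>\<^sub>M M) (borel \<Otimes>\<^sub>M M)"
    by (auto simp: measurable_pair_iff o_def)
  from measurable_compose[OF this assms] show ?thesis .
qed

lemma nn_integral_interval_nn_integral_eq_pair:
  fixes F :: "real \<Rightarrow> 'a \<Rightarrow> ennreal"
  assumes "sigma_finite_measure M"
    and "(\<lambda>(t, \<omega>). F t \<omega>) \<in> borel_measurable (borel \<Otimes>\<^sub>M M)"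
  shows "(\<integral>\<^sup>+ t. indicator {0..T} t * (\<integral>\<^sup>+ \<omega>. F t \<omega> \<partial>M) \<partial>lborel)
       = (\<integral>\<^sup>+ p. F (fst p) (snd p) \<partial>(restrict_space lborel {0..T} \<Otimes>\<^sub>M M))"
proof -
  interpret pair_sigma_finite "restrict_space lborel {0..T}" M
    unfolding pair_sigma_finite_def
    using assms(1) by (auto intro: sigma_finite_measure_restrict_space lborel.sigma_finite_measure_axioms)
  have "(\<lambda>p. F (fst p) (snd p)) \<in> borel_measurable (restrict_space lborel {0..T} \<Otimes>\<^sub>M M)"
    using measurable_restrict_space_pair[OF assms(2)] by (simp add: case_prod_beta')
  from M2.nn_integral_fst[OF this] show ?thesis
    by (simp add: nn_integral_restrict_space mult.commute)
qed

lemma time_exp_integral_eq_signed_nn_integral: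
  assumes "sigma_finite_measure M"
    and "(\<lambda>(t, \<omega>). f t \<omega>) \<in> borel_measurable (borel \<Otimes>\<^sub>M M)"
  shows "time_exp_integral M T f
       = signed_nn_integral (restrict_space lborel {0..T} \<Otimes>\<^sub>M M) (\<lambda>p. f (fst p) (snd p))"
  using assms unfolding time_exp_integral_def signed_nn_integral_def
  by (simp add: nn_integral_interval_nn_integral_eq_pair)

lemma integrable_restrict_pair_if_AE_eq:
  fixes f :: "real \<Rightarrow> 'a \<Rightarrow> real" and g :: "real \<Rightarrow> 'a \<Rightarrow> ereal"
  assumes "sigma_finite_measure M"
    and f_meas: "(\<lambda>(t, \<omega>). f t \<omega>) \<in> borel_measurable (borel \<Otimes>\<^sub>M M)"
    and g_meas: "(\<lambda>(t, \<omega>). g t \<omega>) \<in> borel_measurable (borel \<Otimes>\<^sub>M M)"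
    and g_int: "(\<integral>\<^sup>+ t. indicator {0..T} t * (\<integral>\<^sup>+ \<omega>. e2ennreal \<bar>g t \<omega>\<bar> \<partial>M) \<partial>lborel) < \<infinity>"
    and f_eq: "AE p in restrict_space lborel {0..T} \<Otimes>\<^sub>M M.
                 ereal (f (fst p) (snd p)) = g (fst p) (snd p)"
  shows "integrable (restrict_space lborel {0..T} \<Otimes>\<^sub>M M) (\<lambda>p. f (fst p) (snd p))"
proof (rule integrableI_bounded)
  let ?P = "restrict_space lborel {0..T} \<Otimes>\<^sub>M M"
  show "(\<lambda>p. f (fst p) (snd p)) \<in> borel_measurable ?P"
    using measurable_restrict_space_pair[OF f_meas] by (simp add: case_prod_beta')
  have "(\<integral>\<^sup>+ p. ennreal (norm (f (fst p) (snd p))) \<partial>?P)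
      = (\<integral>\<^sup>+ p. e2ennreal \<bar>g (fst p) (snd p)\<bar> \<partial>?P)"
    using f_eq
    by (intro nn_integral_cong_AE) (auto elim!: eventually_mono simp: eq_commute[of "ereal _"])
  also have "\<dots> < \<infinity>"
    using g_int g_meas
    by (subst (asm) nn_integral_interval_nn_integral_eq_pair[OF \<open>sigma_finite_measure M\<close>]) auto
  finally show "(\<integral>\<^sup>+ p. ennreal (norm (f (fst p) (snd p))) \<partial>?P) < \<infinity>" .
qed

lemma measurable_hamproc:
  assumes X_meas: "(\<lambda>(t, \<omega>). X t \<omega>) \<in> borel_measurable (borel \<Otimes>\<^sub>M M)"
    and H_meas: "(\<lambda>(t, x, \<kappa>, z, p). H t x \<kappa> z p) \<in> borel_measurable borel"
    and grad_meas: "(\<lambda>(t, x). pgrad v t x) \<in> borel_measurable borel"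
    and hess_meas: "(\<lambda>(t, x). phess v t x) \<in> borel_measurable borel"
    and "admissible U u"
  shows "(\<lambda>(t, \<omega>). hamproc H X v u t \<omega>) \<in> borel_measurable (borel \<Otimes>\<^sub>M M)"
proof -
  have path: "(\<lambda>(t, \<omega>). (t, X t \<omega>)) \<in> borel_measurable (borel \<Otimes>\<^sub>M M)"
    using X_meas by (simp add: measurable_pair_iff case_prod_beta')
  have args: "(\<lambda>(t, x). (t, x, u t x, pgrad v t x, phess v t x)) \<in> borel_measurable borel"
    using \<open>admissible U u\<close> grad_meas hess_meas unfolding admissible_def case_prod_beta'
    by (intro borel_measurable_Pair) (auto simp flip: borel_prod)
  from measurable_compose[OF measurable_compose[OF path args] H_meas] show ?thesis
    by (simp add: hamproc_def case_prod_beta')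
qed

lemma infham_le_hamproc:
  assumes "admissible U u"
  shows "infham H U X v t \<omega> \<le> ereal (hamproc H X v u t \<omega>)"
  using assms unfolding infham_def hamproc_def admissible_def by (auto intro: INF_lower)

theorem lemma3p1:
  fixes M :: "'a measure" and T :: real
    and U :: "(real^'m) set"
    and H :: "real \<Rightarrow> real^'d \<Rightarrow> real^'m \<Rightarrow> real^'d \<Rightarrow> real^'d^'d \<Rightarrow> real"
    and X :: "real \<Rightarrow> 'a \<Rightarrow> real^'d"
    and v :: "real \<Rightarrow> real^'d \<Rightarrow> real"
  assumes "prob_space M" and "0 < T"
    and X_meas: "(\<lambda>(t, \<omega>). X t \<omega>) \<in> borel_measurable (borel \<Otimes>\<^sub>M M)"
    and H_meas: "(\<lambda>(t, x, \<kappa>, z, p). H t x \<kappa> z p) \<in> borel_measurable borel"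
    and v_meas: "(\<lambda>(t, x). v t x) \<in> borel_measurable borel"
    and grad_meas: "(\<lambda>(t, x). pgrad v t x) \<in> borel_measurable borel"
    and hess_meas: "(\<lambda>(t, x). phess v t x) \<in> borel_measurable borel"
    and inf_meas: "(\<lambda>(t, \<omega>). infham H U X v t \<omega>) \<in> borel_measurable (borel \<Otimes>\<^sub>M M)"
    and inf_int: "(\<integral>\<^sup>+ t. indicator {0..T} t *
                     (\<integral>\<^sup>+ \<omega>. e2ennreal \<bar>infham H U X v t \<omega>\<bar> \<partial>M) \<partial>lborel) < \<infinity>"
    and opt_exists: "\<exists>u. admissible U u \<and>
           (AE p in restrict_space lborel {0..T} \<Otimes>\<^sub>M M.
              ereal (hamproc H X v u (fst p) (snd p)) = infham H U X v (fst p) (snd p))"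
  shows "(\<exists>u. admissible U u \<and>
            time_exp_integral M T (hamproc H X v u)
              = (INF ub\<in>{ub. admissible U ub}. time_exp_integral M T (hamproc H X v ub)))
       \<and> (\<forall>u. admissible U u \<and>
            time_exp_integral M T (hamproc H X v u)
              = (INF ub\<in>{ub. admissible U ub}. time_exp_integral M T (hamproc H X v ub))
          \<longrightarrow> (AE p in restrict_space lborel {0..T} \<Otimes>\<^sub>M M.
                 ereal (hamproc H X v u (fst p) (snd p)) = infham H U X v (fst p) (snd p)))"
proof -
  let ?P = "restrict_space lborel {0..T} \<Otimes>\<^sub>M M"
  let ?h = "\<lambda>u p. hamproc H X v u (fst p) (snd p)"
  let ?J = "\<lambda>u. time_exp_integral M T (hamproc H X v u)"
  have M: "sigma_finite_measure M"
    using \<open>prob_space M\<close> by (rule prob_space_imp_sigma_finite)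
  obtain u0 where adm0: "admissible U u0"
    and opt0: "AE p in ?P. ereal (?h u0 p) = infham H U X v (fst p) (snd p)"
    using opt_exists by blast
  have h_meas: "(\<lambda>(t, \<omega>). hamproc H X v u t \<omega>) \<in> borel_measurable (borel \<Otimes>\<^sub>M M)"
    if "admissible U u" for u
    using X_meas H_meas grad_meas hess_meas that by (rule measurable_hamproc)
  have int0: "integrable ?P (?h u0)"
    using M h_meas[OF adm0] inf_meas inf_int opt0 by (rule integrable_restrict_pair_if_AE_eq)
  have J_eq: "?J u = signed_nn_integral ?P (?h u)" if "admissible U u" for u
    using M h_meas[OF that] by (rule time_exp_integral_eq_signed_nn_integral)
  have below: "AE p in ?P. ?h u0 p \<le> ?h u p" if "admissible U u" for u
    using opt0 by eventually_elim (metis infham_le_hamproc[OF that] ereal_less_eq(3))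
  have J_min: "?J u0 \<le> ?J u" if "admissible U u" for u
    using signed_nn_integral_mono_AE[OF below[OF that]] by (simp add: J_eq adm0 that)
  have J_u0: "?J u0 = (INF ub\<in>{ub. admissible U ub}. ?J ub)"
    using adm0 J_min by (intro order.antisym INF_greatest INF_lower) auto
  moreover have "AE p in ?P. ereal (?h u p) = infham H U X v (fst p) (snd p)"
    if "admissible U u" and "?J u = (INF ub\<in>{ub. admissible U ub}. ?J ub)" for u
  proof -
    have "?J u = ?J u0"
      using that J_u0 J_min by (metis order.antisym)
    moreover have "?h u \<in> borel_measurable ?P"
      using measurable_restrict_space_pair[OF h_meas[OF that(1)]] by (simp add: case_prod_beta')
    ultimately have "AE p in ?P. ?h u0 p = ?h u p"
      using int0 below[OF that(1)]
      by (intro AE_eq_if_signed_nn_integral_eq) (simp_all add: J_eq adm0 that(1))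
    with opt0 show ?thesis by eventually_elim simp
  qed
  ultimately show ?thesis using adm0 by blast
qed

end
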